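(* Let $n\ge2$, $1\le m,k\le n$, and set $A=k$, $B=k-m$. Then: (a) The presentation $\mathcal{H}_n(m,k)$ satisfies C(3)-T(6) if and only if $tA\not\equiv0$ and $tB\not\equiv0$ for all $1\le t\le5$, and $A\not\equiv\pm B$, $A\not\equiv\pm2B$, $B\not\equiv\pm2A$ (all congruences mod $n$); moreover, in this case it is a non-special C(3)-T(6) presentation. (b) The presentation $\mathcal{H}_n(m,k)$ satisfies C(3)-T(7) if and only if $tA\not\equiv0$ and $tB\not\equiv0$ for all $1\le t\le6$, and $A\not\equiv\pm2B$, $A\not\equiv\pm3B$, $B\not\equiv\pm2A$, $B\not\equiv\pm3A$, $2A\not\equiv\pm2B$ (all congruences mod $n$).
   Context: $\mathcal{H}_n(m,k)=\langle x_1,\ldots,x_n\mid x_ix_{i+m}x_{i+k}^{-1}\ (1\le i\le n)\rangle$ (subscripts mod $n$), defining the group $H_n(m,k)$. The C($p$) and T($q$) conditions are the standard small cancellation conditions (Lyndon–Schupp, Ch. V) for the symmetrized closure of the relators. The star graph of a presentation $\langle X\mid R\rangle$ has vertex set $X\cup X^{-1}$ and an edge from $x$ to $y$ for each distinct word $x^{-1}yu$ ($x\ne y$) that is a cyclic permutation of a relator or its inverse; for presentations with all relators of length at least 3, C(3)-T($q$) ($q>4$) holds iff the star graph has no cycle of length less than $q$. A C(3)-T(6) presentation is special if every relator has length 3 and the star graph is isomorphic to the incidence graph of a finite projective plane. *)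

theory Defs
  imports Main "HOL-Number_Theory.Cong"
begin

text \<open>A letter is a generator together with a sign (True = the generator,
False = its inverse).  A word is a list of letters.\<close>

type_synonym 'a letter = "'a \<times> bool"
type_synonym 'a word = "'a letter list"

definition linv :: "'a letter \<Rightarrow> 'a letter" where
  "linv x = (fst x, \<not> snd x)"

definition winv :: "'a word \<Rightarrow> 'a word" where
  "winv w = rev (map linv w)"

definition freely_reduced :: "'a word \<Rightarrow> bool" where
  "freely_reduced w \<longleftrightarrow> (\<forall>i. Suc i < length w \<longrightarrow> w ! Suc i \<noteq> linv (w ! i))"

definition cyclically_reduced :: "'a word \<Rightarrow> bool" where
  "cyclically_reduced w \<longleftrightarrow> freely_reduced w \<and> (w \<noteq> [] \<longrightarrow> last w \<noteq> linv (hd w))"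

definition symmetrized_closure :: "'a word set \<Rightarrow> 'a word set" where
  "symmetrized_closure R = {rotate j r | r j. r \<in> R \<union> winv ` R}"

definition is_piece :: "'a word set \<Rightarrow> 'a word \<Rightarrow> bool" where
  "is_piece S b \<longleftrightarrow>
     (\<exists>r1\<in>S. \<exists>r2\<in>S. r1 \<noteq> r2 \<and> (\<exists>c1. r1 = b @ c1) \<and> (\<exists>c2. r2 = b @ c2))"

definition cond_C :: "'a word set \<Rightarrow> nat \<Rightarrow> bool" where
  "cond_C S p \<longleftrightarrow>
     (\<forall>r\<in>S. \<not> (\<exists>bs. length bs < p \<and> (\<forall>b\<in>set bs. is_piece S b) \<and> r = concat bs))"

definition cond_T :: "'a word set \<Rightarrow> nat \<Rightarrow> bool" where
  "cond_T S q \<longleftrightarrow>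
     (\<forall>h rs. 3 \<le> h \<and> h < q \<and> length rs = h \<and> set rs \<subseteq> S \<and>
        (\<forall>i<h. rs ! (Suc i mod h) \<noteq> winv (rs ! i))
        \<longrightarrow> (\<exists>i<h. freely_reduced (rs ! i @ rs ! (Suc i mod h))))"

text \<open>A presentation \<open>\<langle>X | R\<rangle>\<close> is C(p)-T(q) if its relators are cyclically reduced
words over X (so that the symmetrized closure is a symmetrized set in the sense of
Lyndon--Schupp) and the symmetrized closure satisfies C(p) and T(q).\<close>

definition C_T_presentation :: "'a set \<Rightarrow> 'a word set \<Rightarrow> nat \<Rightarrow> nat \<Rightarrow> bool" where
  "C_T_presentation X R p q \<longleftrightarrow>
     (\<forall>r\<in>R. cyclically_reduced r \<and> fst ` set r \<subseteq> X) \<and>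
     cond_C (symmetrized_closure R) p \<and> cond_T (symmetrized_closure R) q"

text \<open>Vertices: X \<union> X^-1.  A (directed) edge from x to y for each distinct word
x^-1 y u (x \<noteq> y) which is a cyclic permutation of a relator or its inverse; the edge
is the word itself.\<close>

definition star_vertices :: "'a set \<Rightarrow> 'a letter set" where
  "star_vertices X = X \<times> (UNIV :: bool set)"

definition star_edges :: "'a word set \<Rightarrow> 'a word set" where
  "star_edges R = {w \<in> symmetrized_closure R. 2 \<le> length w \<and> linv (w ! 0) \<noteq> w ! 1}"

definition star_tail :: "'a word \<Rightarrow> 'a letter" where
  "star_tail w = linv (w ! 0)"

definition star_head :: "'a word \<Rightarrow> 'a letter" where
  "star_head w = w ! 1"

definition finite_projective_plane :: "'p set \<Rightarrow> 'l set \<Rightarrow> ('p \<times> 'l) set \<Rightarrow> bool" where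
  "finite_projective_plane P L I \<longleftrightarrow>
     finite P \<and> finite L \<and> I \<subseteq> P \<times> L \<and>
     (\<forall>p\<in>P. \<forall>p'\<in>P. p \<noteq> p' \<longrightarrow> (\<exists>!l. l \<in> L \<and> (p, l) \<in> I \<and> (p', l) \<in> I)) \<and>
     (\<forall>l\<in>L. \<forall>l'\<in>L. l \<noteq> l' \<longrightarrow> (\<exists>!p. p \<in> P \<and> (p, l) \<in> I \<and> (p, l') \<in> I)) \<and>
     (\<exists>Q. Q \<subseteq> P \<and> card Q = 4 \<and> (\<forall>l\<in>L. card {p\<in>Q. (p, l) \<in> I} \<le> 2))"

text \<open>Incidence graph (as a symmetric digraph: each undirected edge appears in both
directions, matching the star graph where the edges x^-1 y u and y^-1 x u^-1 pair up).\<close>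

definition incidence_edges :: "('p \<times> 'l) set \<Rightarrow> (('p + 'l) \<times> ('p + 'l)) set" where
  "incidence_edges I = {(Inl p, Inr l) | p l. (p, l) \<in> I} \<union> {(Inr l, Inl p) | p l. (p, l) \<in> I}"

definition special_presentation :: "'a set \<Rightarrow> 'a word set \<Rightarrow> bool" where
  "special_presentation X R \<longleftrightarrow>
     (\<forall>r\<in>R. length r = 3) \<and>
     (\<exists>(P :: nat set) (L :: nat set) I. finite_projective_plane P L I \<and>
        (\<exists>f g. bij_betw f (star_vertices X) (P <+> L) \<and>
               bij_betw g (star_edges R) (incidence_edges I) \<and>
               (\<forall>w\<in>star_edges R. g w = (f (star_tail w), f (star_head w)))))"

definition H_gens :: "nat \<Rightarrow> nat set" where
  "H_gens n = {..<n}"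

definition H_rels :: "nat \<Rightarrow> nat \<Rightarrow> nat \<Rightarrow> nat word set" where
  "H_rels n m k = {[(i, True), ((i + m) mod n, True), ((i + k) mod n, False)] | i. i < n}"

end

theory Submission
  imports Defs
begin

text \<open>Every word of the symmetrized closure of H_n(m,k) is one of six cyclic rotations of a
relator or of its inverse, determined by its rotation type and a base index i < n. A cycle of such
words that cancels at every junction (a violation of T(q)) therefore consists of a closed walk in a
fixed graph on the six rotation types together with base indices, and suitable indices exist
exactly when the total index displacement a A + b B of the walk, with A = k and B = k - m,
vanishes modulo n. Enumerating the closed walks of length at most 6 turns C(3)-T(q) into finitely
many non-congruences; C(3) itself only needs 2A, 2B \<noteq> 0 mod n, since pieces then have length at
most 1. Finally, every vertex of the star graph has out-degree 3, so a projective plane realising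
it has at most 7 points and 7 lines and n \<le> 7; but under the conditions of (a) the eight residues
x A + y B with (x, y) in {0,1,2} \<times> {0,1} \<union> {(1,2), (1,-1)} are pairwise distinct, so n \<ge> 8.\<close>

lemma freely_reduced_Nil [simp]: "freely_reduced []"
  and freely_reduced_singleton [simp]: "freely_reduced [x]"
  by (simp_all add: freely_reduced_def)

lemma freely_reduced_Cons_Cons:
  "freely_reduced (x # y # xs) \<longleftrightarrow> y \<noteq> linv x \<and> freely_reduced (y # xs)"
  unfolding freely_reduced_def
  by (auto simp: All_less_Suc2 simp del: nth_Cons_Suc)

lemma freely_reduced_append:
  "freely_reduced (u @ v) \<longleftrightarrow>
     freely_reduced u \<and> freely_reduced v \<and> (u \<noteq> [] \<longrightarrow> v \<noteq> [] \<longrightarrow> hd v \<noteq> linv (last u))"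
proof (induction u rule: induct_list012)
  case 1
  show ?case by simp
next
  case (2 x)
  show ?case by (cases v) (auto simp: freely_reduced_Cons_Cons)
next
  case (3 x y zs)
  then show ?case by (simp add: freely_reduced_Cons_Cons)
qed

definition cancelling_cycle :: "'a word set \<Rightarrow> 'a word list \<Rightarrow> bool" where
  "cancelling_cycle S rs \<longleftrightarrow> set rs \<subseteq> S \<and>
     (\<forall>i<length rs. rs ! (Suc i mod length rs) \<noteq> winv (rs ! i) \<and>
        \<not> freely_reduced (rs ! i @ rs ! (Suc i mod length rs)))"

lemma cond_T_iff_no_cancelling_cycle:
  "cond_T S q \<longleftrightarrow> (\<forall>rs. 3 \<le> length rs \<longrightarrow> length rs < q \<longrightarrow> \<not> cancelling_cycle S rs)"
  unfolding cond_T_def cancelling_cycle_def by blast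

lemma mod_add_eq_iff_cong:
  fixes i a b n :: nat
  shows "(i + a) mod n = (i + b) mod n \<longleftrightarrow> [a = b] (mod n)"
  "i mod n = (i + b) mod n \<longleftrightarrow> [b = 0] (mod n)"
  "(i + a) mod n = i mod n \<longleftrightarrow> [a = 0] (mod n)"
  by (metis cong_def cong_add_lcancel_nat add_0_right cong_sym_eq)+

lemma sum_rotate_index:
  assumes "0 < h"
  shows "(\<Sum>j<h. g (Suc j mod h)) = (\<Sum>j<h. g j)"
proof (rule sum.reindex_bij_betw)
  show "bij_betw (\<lambda>j. Suc j mod h) {..<h} {..<h}"
    by (rule bij_betw_byWitness[where f' = "\<lambda>j. if j = 0 then h - 1 else j - 1"])
      (use assms in \<open>auto simp: mod_Suc\<close>)
qed

lemma cyclic_offsets_sum_cong: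
  fixes X a b :: "nat \<Rightarrow> nat"
  assumes "0 < h" and "\<And>j. j < h \<Longrightarrow> [X (Suc j mod h) + a (Suc j mod h) = X j + b j] (mod n)"
  shows "[(\<Sum>j<h. a j) = (\<Sum>j<h. b j)] (mod n)"
proof -
  have "[(\<Sum>j<h. X (Suc j mod h) + a (Suc j mod h)) = (\<Sum>j<h. X j + b j)] (mod n)"
    by (rule cong_sum) (use assms(2) in simp)
  then have "[(\<Sum>j<h. X j) + (\<Sum>j<h. a j) = (\<Sum>j<h. X j) + (\<Sum>j<h. b j)] (mod n)"
    using sum_rotate_index[OF assms(1), of "\<lambda>j. X j + a j"] by (simp add: sum.distrib)
  then show ?thesis by (simp add: cong_add_lcancel_nat)
qed

lemma cyclic_offsets_exist:
  fixes a b :: "nat \<Rightarrow> nat"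
  assumes "0 < n" and "int n dvd (\<Sum>j<h. int (b j) - int (a j))"
  obtains X where "\<And>j. X j < n"
    and "\<And>j. j < h \<Longrightarrow> [X (Suc j mod h) + a (Suc j mod h) = X j + b j] (mod n)"
proof
  define D where "D j = (\<Sum>l<j. int (b l) - int (a l))" for j
  define X where "X j = nat ((D j - int (a j)) mod int n)" for j
  have X_plus: "[int (X j) + int c = D j - int (a j) + int c] (mod int n)" for j c
    using assms(1) by (simp add: X_def cong_def mod_add_left_eq)
  show "X j < n" for j
    using assms(1) by (simp add: X_def nat_less_iff)
  fix j assume "j < h"
  have "[D (Suc j mod h) = D (Suc j)] (mod int n)"
  proof (cases "Suc j < h")
    case False
    with \<open>j < h\<close> have "Suc j = h" by simp
    then show ?thesis using assms(2) by (simp add: D_def cong_def dvd_eq_mod_eq_0)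
  qed simp
  then have "[int (X (Suc j mod h) + a (Suc j mod h)) = int (X j + b j)] (mod int n)"
    using X_plus[of "Suc j mod h" "a (Suc j mod h)"] X_plus[of j "b j"]
    by (simp add: D_def algebra_simps cong_def)
  then show "[X (Suc j mod h) + a (Suc j mod h) = X j + b j] (mod n)"
    by (simp only: cong_int_iff)
qed

lemma dvd_of_swapped_congs:
  fixes i j a b n :: nat
  assumes "[i + a = j + b] (mod n)" and "[i + b = j + a] (mod n)"
  shows "int n dvd 2 * (int a - int b)"
proof -
  have "int n dvd int (i + a) - int (j + b)" "int n dvd int (i + b) - int (j + a)"
    using assms by (simp_all only: cong_iff_dvd_diff flip: cong_int_iff)
  then have "int n dvd (int (i + a) - int (j + b)) - (int (i + b) - int (j + a))"
    by (rule dvd_diff)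
  then show ?thesis
    by (simp add: algebra_simps)
qed

section \<open>Linear relations between two residues\<close>

definition is_relation :: "int \<Rightarrow> int \<Rightarrow> int \<Rightarrow> int \<times> int \<Rightarrow> bool" where
  "is_relation N A B z \<longleftrightarrow> N dvd fst z * A + snd z * B"

definition relation_free :: "int \<Rightarrow> int \<Rightarrow> int \<Rightarrow> (int \<times> int) set \<Rightarrow> bool" where
  "relation_free N A B Z \<longleftrightarrow> (\<forall>z\<in>Z. \<not> is_relation N A B z)"

lemma relation_free_insert [simp]:
  "relation_free N A B (insert z Z) \<longleftrightarrow> \<not> is_relation N A B z \<and> relation_free N A B Z"
  and relation_free_empty [simp]: "relation_free N A B {}"
  and relation_free_Un [simp]:
    "relation_free N A B (Y \<union> Z) \<longleftrightarrow> relation_free N A B Y \<and> relation_free N A B Z"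
  by (auto simp: relation_free_def)

text \<open>Oriented so that the simplifier normalises a pair to one with nonnegative first entry.\<close>

lemma is_relation_uminus:
  "is_relation N A B (- a, b) \<longleftrightarrow> is_relation N A B (a, - b)"
  "is_relation N A B (0, - b) \<longleftrightarrow> is_relation N A B (0, b)"
proof -
  have "- a * A + b * B = - (a * A + - b * B)" "0 * A + - b * B = - (0 * A + b * B)"
    by simp_all
  then show "is_relation N A B (- a, b) \<longleftrightarrow> is_relation N A B (a, - b)"
    "is_relation N A B (0, - b) \<longleftrightarrow> is_relation N A B (0, b)"
    unfolding is_relation_def fst_conv snd_conv by (simp_all only: dvd_minus_iff)
qed

lemma is_relation_scale: "is_relation N A B (a, b) \<Longrightarrow> is_relation N A B (c * a, c * b)"
proof -
  have "c * a * A + c * b * B = c * (a * A + b * B)"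
    by (simp add: algebra_simps)
  then show "is_relation N A B (a, b) \<Longrightarrow> is_relation N A B (c * a, c * b)"
    unfolding is_relation_def by (simp add: dvd_mult)
qed

lemma cong_iff_is_relation:
  fixes N A B a b :: int
  shows "[a * A = 0] (mod N) \<longleftrightarrow> is_relation N A B (a, 0)"
    "[b * B = 0] (mod N) \<longleftrightarrow> is_relation N A B (0, b)"
    "[a * A = b * B] (mod N) \<longleftrightarrow> is_relation N A B (a, - b)"
    "[a * A = - (b * B)] (mod N) \<longleftrightarrow> is_relation N A B (a, b)"
    "[A = b * B] (mod N) \<longleftrightarrow> is_relation N A B (1, - b)"
    "[A = - (b * B)] (mod N) \<longleftrightarrow> is_relation N A B (1, b)"
    "[A = B] (mod N) \<longleftrightarrow> is_relation N A B (1, - 1)"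
    "[A = - B] (mod N) \<longleftrightarrow> is_relation N A B (1, 1)"
    "[B = a * A] (mod N) \<longleftrightarrow> is_relation N A B (a, - 1)"
    "[B = - (a * A)] (mod N) \<longleftrightarrow> is_relation N A B (a, 1)"
  by (simp_all add: is_relation_def cong_iff_dvd_diff dvd_diff_commute[of N B] add.commute)

lemma card_le_of_no_relation_differences:
  fixes n :: nat and P :: "(int \<times> int) set"
  assumes "0 < n" and "finite P"
    and no_rel: "\<And>p q. p \<in> P \<Longrightarrow> q \<in> P \<Longrightarrow> p \<noteq> q \<Longrightarrow>
      \<not> is_relation (int n) A B (fst p - fst q, snd p - snd q)"
  shows "card P \<le> n"
proof -
  let ?res = "\<lambda>p. nat ((fst p * A + snd p * B) mod int n)"
  have "inj_on ?res P"
  proof (rule inj_onI, rule ccontr)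
    fix p q assume "p \<in> P" "q \<in> P" "?res p = ?res q" "p \<noteq> q"
    then have "(fst p * A + snd p * B) mod int n = (fst q * A + snd q * B) mod int n"
      using assms(1) by (simp add: eq_nat_nat_iff)
    then have "int n dvd (fst p * A + snd p * B) - (fst q * A + snd q * B)"
      by (simp add: mod_eq_dvd_iff)
    then have "is_relation (int n) A B (fst p - fst q, snd p - snd q)"
      by (simp add: is_relation_def algebra_simps)
    with no_rel \<open>p \<in> P\<close> \<open>q \<in> P\<close> \<open>p \<noteq> q\<close> show False
      by blast
  qed
  moreover have "?res ` P \<subseteq> {..<n}"
    using assms(1) by (auto simp: nat_less_iff)
  ultimately show ?thesis
    using card_inj_on_le[of ?res P "{..<n}"] by simp
qed

lemma all_int_1_to_5:
  "(\<forall>t::int. 1 \<le> t \<and> t \<le> 5 \<longrightarrow> P t) \<longleftrightarrow> P 1 \<and> P 2 \<and> P 3 \<and> P 4 \<and> P 5"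
  and all_int_1_to_6:
  "(\<forall>t::int. 1 \<le> t \<and> t \<le> 6 \<longrightarrow> P t) \<longleftrightarrow> P 1 \<and> P 2 \<and> P 3 \<and> P 4 \<and> P 5 \<and> P 6"
proof -
  have "{t::int. 1 \<le> t \<and> t \<le> 5} = {1, 2, 3, 4, 5}" "{t::int. 1 \<le> t \<and> t \<le> 6} = {1, 2, 3, 4, 5, 6}"
    by auto
  then show "(\<forall>t::int. 1 \<le> t \<and> t \<le> 5 \<longrightarrow> P t) \<longleftrightarrow> P 1 \<and> P 2 \<and> P 3 \<and> P 4 \<and> P 5"
    "(\<forall>t::int. 1 \<le> t \<and> t \<le> 6 \<longrightarrow> P t) \<longleftrightarrow> P 1 \<and> P 2 \<and> P 3 \<and> P 4 \<and> P 5 \<and> P 6"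
    by (simp_all add: set_eq_iff) blast+
qed

section \<open>Cyclic chains of rotation types\<close>

text \<open>Rel j is the relator x_i x_(i+m) x_(i+k)^-1 rotated left by j letters and Inv j is its
inverse x_(i+k) x_(i+m)^-1 x_i^-1 rotated left by j letters. Consecutive words of a cancelling
cycle have linked types: the first letter of the second word has the opposite sign of the last
letter of the first, and the second word is not the inverse of the first.\<close>

datatype rot = Rel0 | Rel1 | Rel2 | Inv0 | Inv1 | Inv2

fun first_sign :: "rot \<Rightarrow> bool" where
  "first_sign Rel0 = True" | "first_sign Rel1 = True" | "first_sign Rel2 = False"
| "first_sign Inv0 = True" | "first_sign Inv1 = False" | "first_sign Inv2 = False"

fun mid_sign :: "rot \<Rightarrow> bool" where
  "mid_sign Rel0 = True" | "mid_sign Rel1 = False" | "mid_sign Rel2 = True"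
| "mid_sign Inv0 = False" | "mid_sign Inv1 = False" | "mid_sign Inv2 = True"

fun last_sign :: "rot \<Rightarrow> bool" where
  "last_sign Rel0 = False" | "last_sign Rel1 = True" | "last_sign Rel2 = True"
| "last_sign Inv0 = False" | "last_sign Inv1 = True" | "last_sign Inv2 = False"

fun inv_rot :: "rot \<Rightarrow> rot" where
  "inv_rot Rel0 = Inv0" | "inv_rot Rel1 = Inv2" | "inv_rot Rel2 = Inv1"
| "inv_rot Inv0 = Rel0" | "inv_rot Inv1 = Rel2" | "inv_rot Inv2 = Rel1"

definition link :: "rot \<Rightarrow> rot \<Rightarrow> bool" where
  "link f g \<longleftrightarrow> first_sign g \<noteq> last_sign f \<and> g \<noteq> inv_rot f"

text \<open>The index of the last letter minus that of the first letter, as a combination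
of k and k - m.\<close>

fun coeff_A :: "rot \<Rightarrow> int" where
  "coeff_A Rel0 = 1" | "coeff_A Rel1 = -1" | "coeff_A Rel2 = 0"
| "coeff_A Inv0 = -1" | "coeff_A Inv1 = 0" | "coeff_A Inv2 = 1"

fun coeff_B :: "rot \<Rightarrow> int" where
  "coeff_B Rel0 = 0" | "coeff_B Rel1 = 1" | "coeff_B Rel2 = -1"
| "coeff_B Inv0 = 0" | "coeff_B Inv1 = 1" | "coeff_B Inv2 = -1"

definition weight :: "rot list \<Rightarrow> int \<times> int" where
  "weight fs = (\<Sum>f\<leftarrow>fs. coeff_A f, \<Sum>f\<leftarrow>fs. coeff_B f)"

definition cyclic_chain :: "rot list \<Rightarrow> bool" where
  "cyclic_chain fs \<longleftrightarrow> (\<forall>j<length fs. link (fs ! j) (fs ! (Suc j mod length fs)))"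

definition all_rots :: "rot list" where
  "all_rots = [Rel0, Rel1, Rel2, Inv0, Inv1, Inv2]"

lemma set_all_rots: "set all_rots = UNIV"
  using rot.exhaust by (auto simp: all_rots_def)

instance rot :: finite
  by standard (simp flip: set_all_rots)

fun link_paths :: "nat \<Rightarrow> rot \<Rightarrow> rot list list" where
  "link_paths 0 f = [[f]]"
| "link_paths (Suc l) f = concat (map (\<lambda>g. map ((#) f) (link_paths l g)) (filter (link f) all_rots))"

definition cyclic_chains :: "nat \<Rightarrow> rot list list" where
  "cyclic_chains h =
     concat (map (\<lambda>f. filter (\<lambda>fs. link (last fs) f) (link_paths (h - 1) f)) all_rots)"

lemma set_link_paths:
  "set (link_paths l f) = {fs. length fs = Suc l \<and> fs ! 0 = f \<and> (\<forall>j<l. link (fs ! j) (fs ! Suc j))}"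
proof (induction l arbitrary: f)
  case 0
  show ?case by (auto simp: length_Suc_conv)
next
  case (Suc l)
  show ?case
  proof (intro set_eqI iffI)
    fix fs assume "fs \<in> set (link_paths (Suc l) f)"
    then obtain g gs where "link f g" "gs \<in> set (link_paths l g)" "fs = f # gs"
      by (auto simp: set_all_rots)
    then show "fs \<in> {fs. length fs = Suc (Suc l) \<and> fs ! 0 = f \<and> (\<forall>j<Suc l. link (fs ! j) (fs ! Suc j))}"
      using Suc.IH by (auto simp: less_Suc_eq_0_disj)
  next
    fix fs assume "fs \<in> {fs. length fs = Suc (Suc l) \<and> fs ! 0 = f \<and> (\<forall>j<Suc l. link (fs ! j) (fs ! Suc j))}"
    then obtain gs where fs: "fs = f # gs" "length gs = Suc l" "\<forall>j<Suc l. link (fs ! j) (fs ! Suc j)"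
      by (auto simp: length_Suc_conv)
    then have "link f (gs ! 0)" "gs \<in> set (link_paths l (gs ! 0))"
      using Suc.IH by force+
    then show "fs \<in> set (link_paths (Suc l) f)"
      using fs(1) by (force simp: set_all_rots)
  qed
qed

lemma set_cyclic_chains:
  assumes "0 < h"
  shows "set (cyclic_chains h) = {fs. length fs = h \<and> cyclic_chain fs}"
proof -
  have "cyclic_chain fs \<longleftrightarrow> (\<forall>j<h - 1. link (fs ! j) (fs ! Suc j)) \<and> link (last fs) (fs ! 0)"
    if "length fs = h" for fs
  proof -
    have "fs \<noteq> []" "last fs = fs ! (h - 1)" using that assms by (auto simp: last_conv_nth)
    moreover have "Suc j mod h = (if j = h - 1 then 0 else Suc j)" if "j < h" for j
      using that by auto
    ultimately show ?thesis
      unfolding cyclic_chain_def \<open>length fs = h\<close> using assms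
      by (auto simp: less_Suc_eq)
  qed
  then show ?thesis
    using assms by (auto simp: cyclic_chains_def set_link_paths set_all_rots)
qed

definition cycle_weights :: "nat \<Rightarrow> (int \<times> int) set" where
  "cycle_weights q = weight ` {fs. 3 \<le> length fs \<and> length fs < q \<and> cyclic_chain fs}"

lemma cycle_weights_eq: "cycle_weights q = (\<Union>h\<in>{3..<q}. set (map weight (cyclic_chains h)))"
  by (auto simp: cycle_weights_def set_cyclic_chains)

lemma cycle_weights_6:
  "cycle_weights 6 = {(3,0), (-3,0), (0,3), (0,-3), (4,0), (-4,0), (0,4), (0,-4),
     (1,1), (-1,-1), (1,-1), (-1,1), (5,0), (-5,0), (0,5), (0,-5),
     (1,2), (-1,-2), (1,-2), (-1,2), (2,1), (-2,-1), (2,-1), (-2,1)}"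
  unfolding cycle_weights_eq by code_simp

lemma cycle_weights_7:
  "cycle_weights 7 = cycle_weights 6 \<union> {(6,0), (-6,0), (0,6), (0,-6), (3,1), (-3,-1), (3,-1), (-3,1),
     (1,3), (-1,-3), (1,-3), (-1,3), (2,2), (-2,-2), (2,-2), (-2,2)}"
  unfolding cycle_weights_eq by code_simp

lemma cycle_weights_4:
  assumes "5 \<le> q"
  shows "(4, 0) \<in> cycle_weights q" "(0, 4) \<in> cycle_weights q"
proof -
  have "cyclic_chain (replicate 4 Rel0)" "cyclic_chain (replicate 4 Inv1)"
    by (simp_all add: cyclic_chain_def link_def)
  moreover have "weight (replicate 4 Rel0) = (4, 0)" "weight (replicate 4 Inv1) = (0, 4)"
    by (simp_all add: weight_def numeral_eq_Suc)
  moreover have "3 \<le> length (replicate 4 f) \<and> length (replicate 4 f) < q" for f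
    using assms by simp
  ultimately show "(4, 0) \<in> cycle_weights q" "(0, 4) \<in> cycle_weights q"
    unfolding cycle_weights_def by (metis (mono_tags, lifting) image_eqI mem_Collect_eq)+
qed

definition sign_pattern :: "rot \<Rightarrow> bool list" where
  "sign_pattern f = [first_sign f, mid_sign f, last_sign f]"

lemma card_first_sign: "card {f. first_sign f = b} = 3"
proof -
  have "{f. first_sign f = b} = (if b then {Rel0, Rel1, Inv0} else {Rel2, Inv1, Inv2})"
    by (auto elim: first_sign.elims)
  then show ?thesis
    by simp
qed

section \<open>Counting in projective planes\<close>

lemma card_points_le_of_degrees:
  fixes I :: "('p \<times> 'l) set"
  assumes "finite P" "finite L" "I \<subseteq> P \<times> L"
    and join: "\<And>p p'. p \<in> P \<Longrightarrow> p' \<in> P \<Longrightarrow> p \<noteq> p' \<Longrightarrow> \<exists>l. (p, l) \<in> I \<and> (p', l) \<in> I"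
    and deg_point: "\<And>p. card {l. (p, l) \<in> I} \<le> Suc q"
    and deg_line: "\<And>l. card {p. (p, l) \<in> I} \<le> Suc q"
  shows "card P \<le> Suc (Suc q * q)"
proof (cases "P = {}")
  case False
  then obtain p0 where p0: "p0 \<in> P" by auto
  let ?Lp = "{l. (p0, l) \<in> I}"
  let ?U = "\<Union>l\<in>?Lp. {p. (p, l) \<in> I} - {p0}"
  have fin_Lp: "finite ?Lp" and fin_pts: "\<And>l. finite {p. (p, l) \<in> I}"
    using assms(1-3) by (auto intro: rev_finite_subset)
  have fin_U: "finite ?U"
    using fin_Lp fin_pts by blast
  have "P \<subseteq> insert p0 ?U"
    using join p0 by blast
  then have "card P \<le> card (insert p0 ?U)"
    using fin_U by (intro card_mono) simp_all
  also have "\<dots> \<le> Suc (card ?U)"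
    by (simp only: card_insert_if[OF fin_U]) simp
  also have "card ?U \<le> (\<Sum>l\<in>?Lp. card ({p. (p, l) \<in> I} - {p0}))"
    by (rule card_UN_le[OF fin_Lp])
  also have "\<dots> \<le> (\<Sum>l\<in>?Lp. q)"
  proof (rule sum_mono)
    fix l assume "l \<in> ?Lp"
    then show "card ({p. (p, l) \<in> I} - {p0}) \<le> q"
      using deg_line[of l] fin_pts[of l] by (simp add: card_Diff_singleton)
  qed
  also have "\<dots> = card ?Lp * q"
    by simp
  also have "\<dots> \<le> Suc q * q"
    using deg_point[of p0] by (rule mult_le_mono1)
  finally show ?thesis
    by simp
qed simp

lemma finite_projective_plane_card_le:
  assumes plane: "finite_projective_plane P L I"
    and deg_point: "\<And>p. card {l. (p, l) \<in> I} \<le> Suc q"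
    and deg_line: "\<And>l. card {p. (p, l) \<in> I} \<le> Suc q"
  shows "card P \<le> Suc (Suc q * q)" "card L \<le> Suc (Suc q * q)"
proof -
  have fin: "finite P" "finite L" and I: "I \<subseteq> P \<times> L"
    and "\<forall>p\<in>P. \<forall>p'\<in>P. p \<noteq> p' \<longrightarrow> (\<exists>!l. l \<in> L \<and> (p, l) \<in> I \<and> (p', l) \<in> I)"
    "\<forall>l\<in>L. \<forall>l'\<in>L. l \<noteq> l' \<longrightarrow> (\<exists>!p. p \<in> P \<and> (p, l) \<in> I \<and> (p, l') \<in> I)"
    using plane unfolding finite_projective_plane_def by - (elim conjE, assumption)+
  then have join: "\<And>p p'. p \<in> P \<Longrightarrow> p' \<in> P \<Longrightarrow> p \<noteq> p' \<Longrightarrow> \<exists>l. (p, l) \<in> I \<and> (p', l) \<in> I"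
    and meet: "\<And>l l'. l \<in> L \<Longrightarrow> l' \<in> L \<Longrightarrow> l \<noteq> l' \<Longrightarrow> \<exists>p. (p, l) \<in> I \<and> (p, l') \<in> I"
    by (metis ex1_implies_ex)+
  show "card P \<le> Suc (Suc q * q)"
    by (rule card_points_le_of_degrees[OF fin I join deg_point deg_line])
  have "converse I \<subseteq> L \<times> P"
    using I by auto
  then show "card L \<le> Suc (Suc q * q)"
    using card_points_le_of_degrees[OF fin(2,1), of "converse I" q] meet deg_point deg_line
    by simp
qed

lemma card_incidence_edges_from:
  "card {y. (Inl p, y) \<in> incidence_edges I} = card {l. (p, l) \<in> I}"
  "card {y. (Inr l, y) \<in> incidence_edges I} = card {p. (p, l) \<in> I}"
proof -
  have "{y. (Inl p, y) \<in> incidence_edges I} = Inr ` {l. (p, l) \<in> I}"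
    "{y. (Inr l, y) \<in> incidence_edges I} = Inl ` {p. (p, l) \<in> I}"
    by (auto simp: incidence_edges_def)
  then show "card {y. (Inl p, y) \<in> incidence_edges I} = card {l. (p, l) \<in> I}"
    "card {y. (Inr l, y) \<in> incidence_edges I} = card {p. (p, l) \<in> I}"
    by (simp_all add: card_image)
qed

lemma card_edges_from_le_of_iso:
  assumes f: "bij_betw f V W" and g: "bij_betw g E Edges"
    and g_ends: "\<And>e. e \<in> E \<Longrightarrow> g e = (f (tail e), f (head e))"
    and tail: "\<And>e. e \<in> E \<Longrightarrow> tail e \<in> V"
    and "finite E" and deg: "\<And>v. v \<in> V \<Longrightarrow> card {e \<in> E. tail e = v} \<le> d"
    and x: "x \<in> W"
  shows "card {y. (x, y) \<in> Edges} \<le> d"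
proof -
  obtain v where v: "v \<in> V" "f v = x"
    using f x by (auto simp: bij_betw_def)
  have "{y. (x, y) \<in> Edges} \<subseteq> (\<lambda>e. f (head e)) ` {e \<in> E. tail e = v}"
  proof
    fix y assume "y \<in> {y. (x, y) \<in> Edges}"
    then obtain e where e: "e \<in> E" "g e = (x, y)"
      using g by (auto simp: bij_betw_def)
    then have "f (tail e) = f v"
      using g_ends v by simp
    then have "tail e = v"
      using f tail[OF e(1)] v(1) by (auto simp: bij_betw_def inj_on_def)
    then show "y \<in> (\<lambda>e. f (head e)) ` {e \<in> E. tail e = v}"
      using e g_ends by force
  qed
  then have "card {y. (x, y) \<in> Edges} \<le> card ((\<lambda>e. f (head e)) ` {e \<in> E. tail e = v})"
    using \<open>finite E\<close> by (intro card_mono) auto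
  also have "\<dots> \<le> card {e \<in> E. tail e = v}"
    by (rule card_image_le) (simp add: \<open>finite E\<close>)
  also have "\<dots> \<le> d"
    by (rule deg[OF v(1)])
  finally show ?thesis .
qed

section \<open>The presentation H_n(m,k)\<close>

lemma rotations_length_3:
  assumes "length w = 3"
  shows "range (\<lambda>j. rotate j w) = {w, rotate1 w, rotate1 (rotate1 w)}"
proof -
  have "range (\<lambda>j. rotate j w) = (\<lambda>j. rotate j w) ` {..<3}"
  proof (intro equalityI subsetI)
    fix u assume "u \<in> range (\<lambda>j. rotate j w)"
    then obtain j where "u = rotate j w" by blast
    then have "u = rotate (j mod 3) w"
      using assms rotate_conv_mod by metis
    then show "u \<in> (\<lambda>j. rotate j w) ` {..<3}" by simp
  qed auto
  also have "\<dots> = {w, rotate1 w, rotate1 (rotate1 w)}"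
    by (simp add: numeral_eq_Suc lessThan_Suc insert_commute)
  finally show ?thesis .
qed

lemma length_concat_le: "\<forall>b\<in>set bs. length b \<le> 1 \<Longrightarrow> length (concat bs) \<le> length bs"
  by (induction bs) auto

locale H_presentation =
  fixes n m k :: nat
  assumes n_pos: "0 < n"
begin

abbreviation Rsym :: "nat word set" where
  "Rsym \<equiv> symmetrized_closure (H_rels n m k)"

fun first_off :: "rot \<Rightarrow> nat" where
  "first_off Rel0 = 0" | "first_off Rel1 = m" | "first_off Rel2 = k"
| "first_off Inv0 = k" | "first_off Inv1 = m" | "first_off Inv2 = 0"

fun mid_off :: "rot \<Rightarrow> nat" where
  "mid_off Rel0 = m" | "mid_off Rel1 = k" | "mid_off Rel2 = 0"
| "mid_off Inv0 = m" | "mid_off Inv1 = 0" | "mid_off Inv2 = k"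

fun last_off :: "rot \<Rightarrow> nat" where
  "last_off Rel0 = k" | "last_off Rel1 = 0" | "last_off Rel2 = m"
| "last_off Inv0 = 0" | "last_off Inv1 = k" | "last_off Inv2 = m"

definition word :: "rot \<Rightarrow> nat \<Rightarrow> nat word" where
  "word f i = [((i + first_off f) mod n, first_sign f), ((i + mid_off f) mod n, mid_sign f),
               ((i + last_off f) mod n, last_sign f)]"

lemma length_word [simp]: "length (word f i) = 3"
  and word_ne_Nil [simp]: "word f i \<noteq> []"
  by (simp_all add: word_def)

lemma winv_word: "winv (word f i) = word (inv_rot f) i"
  by (cases f) (simp_all add: word_def winv_def linv_def)

lemma word_eq_rot: "word f i = word g j \<Longrightarrow> f = g"
  by (cases f; cases g) (simp_all add: word_def)

lemma first_off_inv_rot: "first_off (inv_rot f) = last_off f"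
  by (cases f) simp_all

lemma last_off_minus_first_off:
  "int (last_off f) - int (first_off f) = coeff_A f * int k + coeff_B f * (int k - int m)"
  by (cases f) simp_all

lemma H_rels_eq: "H_rels n m k = word Rel0 ` {..<n}"
  by (auto simp: H_rels_def word_def)

lemma symmetrized_closure_H: "Rsym = {word f i | f i. i < n}"
proof -
  have gens: "H_rels n m k \<union> winv ` H_rels n m k = (\<Union>i<n. {word Rel0 i, word Inv0 i})"
    by (auto simp: H_rels_eq image_image winv_word)
  have rots: "range (\<lambda>j. rotate j (word Rel0 i)) = {word Rel0 i, word Rel1 i, word Rel2 i}"
    "range (\<lambda>j. rotate j (word Inv0 i)) = {word Inv0 i, word Inv1 i, word Inv2 i}" for i
    by (simp_all only: rotations_length_3 length_word) (simp_all add: word_def)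
  have "Rsym = (\<Union>r\<in>H_rels n m k \<union> winv ` H_rels n m k. range (\<lambda>j. rotate j r))"
    by (auto simp: symmetrized_closure_def)
  also have "\<dots> = (\<Union>i<n. range (\<lambda>j. rotate j (word Rel0 i)) \<union> range (\<lambda>j. rotate j (word Inv0 i)))"
    unfolding gens by blast
  also have "\<dots> = (\<Union>i<n. (\<lambda>f. word f i) ` set all_rots)"
    unfolding rots by (simp add: all_rots_def insert_commute)
  also have "\<dots> = {word f i | f i. i < n}"
    by (auto simp: set_all_rots)
  finally show ?thesis .
qed

lemma finite_Rsym: "finite Rsym"
proof -
  have "Rsym = (\<lambda>(f, i). word f i) ` (UNIV \<times> {..<n})"
    by (auto simp: symmetrized_closure_H)
  then show ?thesis
    by simp
qed

definition relators_reduced :: bool where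
  "relators_reduced \<longleftrightarrow> \<not> [k = 0] (mod n) \<and> \<not> [k = m] (mod n)"

lemma relators_reduced_iff:
  "relators_reduced \<longleftrightarrow> relation_free (int n) (int k) (int k - int m) {(1, 0), (0, 1)}"
  by (simp add: relators_reduced_def is_relation_def cong_iff_dvd_diff flip: cong_int_iff)

lemma cyclically_reduced_word_Rel0:
  "cyclically_reduced (word Rel0 i) \<longleftrightarrow> relators_reduced"
  by (auto simp: cyclically_reduced_def relators_reduced_def word_def freely_reduced_Cons_Cons
      linv_def mod_add_eq_iff_cong cong_sym_eq[of m k])

lemma freely_reduced_word:
  assumes relators_reduced
  shows "freely_reduced (word f i)"
  using assms
  by (cases f) (auto simp: relators_reduced_def word_def freely_reduced_Cons_Cons
      linv_def mod_add_eq_iff_cong cong_sym_eq[of m k])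

lemma not_freely_reduced_word_append:
  assumes relators_reduced
  shows "\<not> freely_reduced (word f i @ word g j) \<longleftrightarrow>
           first_sign g \<noteq> last_sign f \<and> [j + first_off g = i + last_off f] (mod n)"
proof -
  have "hd (word g j) = ((j + first_off g) mod n, first_sign g)"
    "last (word f i) = ((i + last_off f) mod n, last_sign f)"
    by (simp_all add: word_def)
  then show ?thesis
    unfolding freely_reduced_append using freely_reduced_word[OF assms]
    by (auto simp: linv_def cong_def)
qed

lemma weight_combination:
  "fst (weight fs) * int k + snd (weight fs) * (int k - int m) =
     (\<Sum>j<length fs. int (last_off (fs ! j)) - int (first_off (fs ! j)))"
  by (simp add: weight_def sum_list_sum_nth atLeast0LessThan last_off_minus_first_off
      sum.distrib sum_distrib_right)

lemma cancelling_cycle_of_cyclic_chain: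
  assumes red: relators_reduced and chain: "cyclic_chain fs"
    and dvd: "int n dvd fst (weight fs) * int k + snd (weight fs) * (int k - int m)"
  obtains rs where "length rs = length fs" "cancelling_cycle Rsym rs"
proof -
  let ?h = "length fs"
  obtain X where X_lt: "\<And>j. X j < n"
    and X_cong: "\<And>j. j < ?h \<Longrightarrow>
      [X (Suc j mod ?h) + first_off (fs ! (Suc j mod ?h)) = X j + last_off (fs ! j)] (mod n)"
    using cyclic_offsets_exist[OF n_pos, where h = ?h and b = "\<lambda>j. last_off (fs ! j)"
        and a = "\<lambda>j. first_off (fs ! j)"] dvd
    by (auto simp: weight_combination)
  define rs where "rs = map (\<lambda>j. word (fs ! j) (X j)) [0..<?h]"
  have "cancelling_cycle Rsym rs"
    unfolding cancelling_cycle_def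
  proof (intro conjI allI impI)
    show "set rs \<subseteq> Rsym"
      using X_lt by (auto simp: rs_def symmetrized_closure_H)
  next
    fix j assume "j < length rs"
    then have "j < ?h"
      by (simp add: rs_def)
    then have j: "j < ?h" "Suc j mod ?h < ?h"
      by (auto intro: mod_less_divisor)
    then have link: "link (fs ! j) (fs ! (Suc j mod ?h))"
      using chain by (simp add: cyclic_chain_def)
    have rs_j: "rs ! j = word (fs ! j) (X j)" "rs ! (Suc j mod length rs) =
        word (fs ! (Suc j mod ?h)) (X (Suc j mod ?h))"
      using j by (simp_all add: rs_def del: upt_Suc)
    show "rs ! (Suc j mod length rs) \<noteq> winv (rs ! j)"
      using link word_eq_rot by (auto simp: rs_j winv_word link_def)
    show "\<not> freely_reduced (rs ! j @ rs ! (Suc j mod length rs))"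
      using link X_cong[of j] j
      by (simp add: rs_j not_freely_reduced_word_append[OF red] link_def rs_def)
  qed
  then show thesis
    by (rule that[rotated]) (simp add: rs_def)
qed

lemma cyclic_chain_of_cancelling_cycle:
  assumes red: relators_reduced and cycle: "cancelling_cycle Rsym rs" and h: "0 < length rs"
  obtains fs where "length fs = length rs" "cyclic_chain fs"
    "int n dvd fst (weight fs) * int k + snd (weight fs) * (int k - int m)"
proof -
  let ?h = "length rs"
  let ?s = "\<lambda>j. Suc j mod ?h"
  have "rs ! j \<in> Rsym" if "j < ?h" for j
    using cycle that nth_mem unfolding cancelling_cycle_def by blast
  then have "\<forall>j<?h. \<exists>f i. i < n \<and> rs ! j = word f i"
    by (fastforce simp: symmetrized_closure_H)
  then obtain F X where "\<forall>j<?h. X j < n \<and> rs ! j = word (F j) (X j)"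
    by metis
  then have X_lt: "\<And>j. j < ?h \<Longrightarrow> X j < n"
    and rs_j: "\<And>j. j < ?h \<Longrightarrow> rs ! j = word (F j) (X j)"
    by simp_all
  have junction: "first_sign (F (?s j)) \<noteq> last_sign (F j) \<and>
      [X (?s j) + first_off (F (?s j)) = X j + last_off (F j)] (mod n)" if "j < ?h" for j
    using cycle that h
    by (simp add: cancelling_cycle_def rs_j not_freely_reduced_word_append[OF red])
  have not_inv: "F (?s j) \<noteq> inv_rot (F j)" if j: "j < ?h" for j
  proof
    assume inv: "F (?s j) = inv_rot (F j)"
    then have "[X (?s j) + last_off (F j) = X j + last_off (F j)] (mod n)"
      using junction[OF j] by (simp add: first_off_inv_rot)
    then have "X (?s j) = X j"
      using X_lt j h by (simp add: cong_add_rcancel_nat cong_less_modulus_unique_nat)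
    then have "rs ! ?s j = winv (rs ! j)"
      using j h inv by (simp add: rs_j winv_word)
    then show False
      using cycle j by (simp add: cancelling_cycle_def)
  qed
  define fs where "fs = map F [0..<?h]"
  have len: "length fs = ?h"
    by (simp add: fs_def)
  have "fs ! ?s j = F (?s j)" for j
    using h by (simp add: fs_def)
  then have chain: "cyclic_chain fs"
    using junction not_inv by (simp add: cyclic_chain_def fs_def link_def)
  have "[(\<Sum>j<?h. first_off (F j)) = (\<Sum>j<?h. last_off (F j))] (mod n)"
    by (rule cyclic_offsets_sum_cong[OF h, of X]) (use junction in blast)
  then have "[int (\<Sum>j<?h. last_off (F j)) = int (\<Sum>j<?h. first_off (F j))] (mod int n)"
    using cong_sym cong_int_iff by blast
  then have "int n dvd (\<Sum>j<?h. int (last_off (F j)) - int (first_off (F j)))"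
    by (simp add: sum_subtractf cong_iff_dvd_diff)
  also have "(\<Sum>j<?h. int (last_off (F j)) - int (first_off (F j))) =
      (\<Sum>j<length fs. int (last_off (fs ! j)) - int (first_off (fs ! j)))"
    by (rule sum.cong) (simp_all add: fs_def)
  finally show thesis
    using that[OF len chain] by (simp add: weight_combination)
qed

lemma cond_T_iff_relation_free:
  assumes red: relators_reduced
  shows "cond_T Rsym q \<longleftrightarrow> relation_free (int n) (int k) (int k - int m) (cycle_weights q)"
proof -
  let ?rel = "\<lambda>fs. int n dvd fst (weight fs) * int k + snd (weight fs) * (int k - int m)"
  have "relation_free (int n) (int k) (int k - int m) (cycle_weights q) \<longleftrightarrow>
      (\<forall>fs. 3 \<le> length fs \<longrightarrow> length fs < q \<longrightarrow> cyclic_chain fs \<longrightarrow> \<not> ?rel fs)"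
    by (auto simp: relation_free_def is_relation_def cycle_weights_def)
  also have "\<dots> \<longleftrightarrow> (\<forall>rs. 3 \<le> length rs \<longrightarrow> length rs < q \<longrightarrow> \<not> cancelling_cycle Rsym rs)"
  proof (intro iffI allI impI notI)
    fix rs assume "\<forall>fs. 3 \<le> length fs \<longrightarrow> length fs < q \<longrightarrow> cyclic_chain fs \<longrightarrow> \<not> ?rel fs"
      and "3 \<le> length rs" "length rs < q" "cancelling_cycle Rsym rs"
    then show False
      using cyclic_chain_of_cancelling_cycle[OF red, of rs] by (metis gr0I not_numeral_le_zero)
  next
    fix fs assume "\<forall>rs. 3 \<le> length rs \<longrightarrow> length rs < q \<longrightarrow> \<not> cancelling_cycle Rsym rs"
      and "3 \<le> length fs" "length fs < q" "cyclic_chain fs" "?rel fs"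
    then show False
      using cancelling_cycle_of_cyclic_chain[OF red, of fs] by metis
  qed
  finally show ?thesis
    by (simp add: cond_T_iff_no_cancelling_cycle)
qed

lemma word_eq_of_first_letters:
  assumes "\<not> int n dvd 2 * int k" and "\<not> int n dvd 2 * (int k - int m)"
    and "i < n" "j < n" and "word f i ! 0 = word g j ! 0" "word f i ! 1 = word g j ! 1"
  shows "word f i = word g j"
proof -
  have signs: "first_sign f = first_sign g" "mid_sign f = mid_sign g"
    and offs: "[i + first_off f = j + first_off g] (mod n)" "[i + mid_off f = j + mid_off g] (mod n)"
    using assms(5,6) by (simp_all add: word_def cong_def)
  have "f = g"
  proof (rule ccontr)
    assume "f \<noteq> g"
    with signs have "(f, g) \<in> {(Rel1, Inv0), (Inv0, Rel1), (Rel2, Inv2), (Inv2, Rel2)}"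
      by (cases f; cases g) simp_all
    moreover have "\<not> int n dvd 2 * (int m - int k)" "\<not> int n dvd 2 * (0 - int k)"
      using assms(1,2) dvd_minus_iff[of "int n" "2 * (int k - int m)"] by (simp_all add: algebra_simps)
    ultimately show False
      using assms(1,2) offs by (auto dest: dvd_of_swapped_congs)
  qed
  then have "i = j"
    using offs(1) assms(3,4) by (simp add: cong_add_rcancel_nat cong_less_modulus_unique_nat)
  with \<open>f = g\<close> show ?thesis by simp
qed

lemma length_piece_le_1:
  assumes "\<not> int n dvd 2 * int k" and "\<not> int n dvd 2 * (int k - int m)" and "is_piece Rsym b"
  shows "length b \<le> 1"
proof (rule ccontr)
  assume "\<not> length b \<le> 1"
  then have "0 < length b" "1 < length b"
    by auto
  from assms(3) obtain r1 r2 c1 c2 where r: "r1 \<in> Rsym" "r2 \<in> Rsym" "r1 \<noteq> r2"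
    "r1 = b @ c1" "r2 = b @ c2"
    by (auto simp: is_piece_def)
  obtain f i g j where w: "i < n" "j < n" "r1 = word f i" "r2 = word g j"
    using r(1,2) by (auto simp: symmetrized_closure_H)
  have "r1 ! 0 = r2 ! 0" "r1 ! 1 = r2 ! 1"
    using \<open>0 < length b\<close> \<open>1 < length b\<close> r(4,5) by (simp_all add: nth_append)
  then have "r1 = r2"
    unfolding w(3,4) by (rule word_eq_of_first_letters[OF assms(1,2) w(1,2)])
  with r(3) show False ..
qed

lemma cond_C_3:
  assumes "\<not> int n dvd 2 * int k" and "\<not> int n dvd 2 * (int k - int m)"
  shows "cond_C Rsym 3"
  unfolding cond_C_def
proof (intro ballI notI, elim exE conjE)
  fix r bs assume r: "r \<in> Rsym" and bs: "length bs < 3" "\<forall>b\<in>set bs. is_piece Rsym b" "r = concat bs"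
  have "length (concat bs) \<le> length bs"
    using bs(2) length_piece_le_1[OF assms] by (intro length_concat_le) blast
  moreover have "length r = 3"
    using r by (auto simp: symmetrized_closure_H)
  ultimately show False
    using bs(1,3) by simp
qed

lemma C_T_presentation_H_iff:
  "C_T_presentation (H_gens n) (H_rels n m k) p q \<longleftrightarrow>
     relators_reduced \<and> cond_C Rsym p \<and> cond_T Rsym q"
proof -
  have "fst ` set (word Rel0 i) \<subseteq> H_gens n" for i
    using n_pos by (auto simp: word_def H_gens_def)
  then have "(\<forall>r\<in>H_rels n m k. cyclically_reduced r \<and> fst ` set r \<subseteq> H_gens n) \<longleftrightarrow>
      (\<forall>i<n. cyclically_reduced (word Rel0 i))"
    by (auto simp: H_rels_eq)
  also have "\<dots> \<longleftrightarrow> relators_reduced"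
    using n_pos by (auto simp: cyclically_reduced_word_Rel0)
  finally show ?thesis
    by (simp add: C_T_presentation_def)
qed

lemma C_T_presentation_iff_relation_free:
  assumes "5 \<le> q"
  shows "C_T_presentation (H_gens n) (H_rels n m k) 3 q \<longleftrightarrow>
    relation_free (int n) (int k) (int k - int m) ({(1,0), (0,1), (2,0), (0,2)} \<union> cycle_weights q)"
    (is "_ \<longleftrightarrow> relation_free ?N ?A ?B _")
proof -
  have two: "relation_free ?N ?A ?B {(2, 0), (0, 2)}" if "relation_free ?N ?A ?B (cycle_weights q)"
  proof -
    have "\<not> is_relation ?N ?A ?B (2 * 2, 2 * 0)" "\<not> is_relation ?N ?A ?B (2 * 0, 2 * 2)"
      using that cycle_weights_4[OF assms] by (auto simp: relation_free_def)
    then show ?thesis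
      using is_relation_scale[of ?N ?A ?B 2 0 2] is_relation_scale[of ?N ?A ?B 0 2 2] by auto
  qed
  have C: "cond_C Rsym 3" if "relation_free ?N ?A ?B {(2, 0), (0, 2)}"
    using that by (intro cond_C_3) (simp_all add: is_relation_def)
  show ?thesis
  proof
    assume "C_T_presentation (H_gens n) (H_rels n m k) 3 q"
    then have "relators_reduced" "cond_T Rsym q"
      by (simp_all add: C_T_presentation_H_iff)
    then show "relation_free ?N ?A ?B ({(1,0), (0,1), (2,0), (0,2)} \<union> cycle_weights q)"
      using two relators_reduced_iff cond_T_iff_relation_free by simp
  next
    assume rf: "relation_free ?N ?A ?B ({(1,0), (0,1), (2,0), (0,2)} \<union> cycle_weights q)"
    then have "relators_reduced"
      by (simp add: relators_reduced_iff)
    with rf show "C_T_presentation (H_gens n) (H_rels n m k) 3 q"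
      using C cond_T_iff_relation_free by (simp add: C_T_presentation_H_iff)
  qed
qed

lemma card_words_with_first_letter: "card {w \<in> Rsym. w ! 0 = x} \<le> 3"
proof -
  let ?W = "{w \<in> Rsym. w ! 0 = x}"
  have "inj_on (map snd) ?W"
  proof (rule inj_onI)
    fix w w' assume "w \<in> ?W" "w' \<in> ?W" and signs: "map snd w = map snd w'"
    then obtain f i f' i' where i: "i < n" "i' < n" and w: "w = word f i" "w' = word f' i'"
      and first: "word f i ! 0 = word f' i' ! 0"
      by (auto simp: symmetrized_closure_H)
    have "f = f'"
      using signs by (cases f; cases f') (simp_all add: w word_def)
    moreover from first have "[i + first_off f = i' + first_off f'] (mod n)"
      by (simp add: word_def cong_def)
    ultimately have "i = i'"
      using i by (simp add: cong_add_rcancel_nat cong_less_modulus_unique_nat)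
    with \<open>f = f'\<close> show "w = w'"
      by (simp add: w)
  qed
  moreover have "map snd ` ?W \<subseteq> sign_pattern ` {f. first_sign f = snd x}"
    by (auto simp: symmetrized_closure_H word_def sign_pattern_def)
  ultimately have "card ?W \<le> card (sign_pattern ` {f. first_sign f = snd x})"
    by (intro card_inj_on_le) auto
  also have "\<dots> \<le> 3"
    using card_image_le[of "{f. first_sign f = snd x}" sign_pattern] card_first_sign by simp
  finally show ?thesis .
qed

lemma finite_star_edges: "finite (star_edges (H_rels n m k))"
  using finite_Rsym by (rule rev_finite_subset) (auto simp: star_edges_def)

lemma star_tail_mem: "w \<in> star_edges (H_rels n m k) \<Longrightarrow> star_tail w \<in> star_vertices (H_gens n)"
  using n_pos
  by (auto simp: star_edges_def star_tail_def star_vertices_def H_gens_def linv_def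
      symmetrized_closure_H word_def)

lemma card_star_edges_from: "card {w \<in> star_edges (H_rels n m k). star_tail w = v} \<le> 3"
proof -
  have "{w \<in> star_edges (H_rels n m k). star_tail w = v} \<subseteq> {w \<in> Rsym. w ! 0 = linv v}"
    by (auto simp: star_edges_def star_tail_def linv_def)
  then have "card {w \<in> star_edges (H_rels n m k). star_tail w = v} \<le> card {w \<in> Rsym. w ! 0 = linv v}"
    using finite_Rsym by (intro card_mono) auto
  also have "\<dots> \<le> 3"
    by (rule card_words_with_first_letter)
  finally show ?thesis .
qed

lemma card_star_vertices: "card (star_vertices (H_gens n)) = 2 * n"
  by (simp add: star_vertices_def H_gens_def card_cartesian_product)

lemma special_presentation_imp_le_7:
  assumes "special_presentation (H_gens n) (H_rels n m k)"
  shows "n \<le> 7"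
proof -
  obtain P L :: "nat set" and I f g where plane: "finite_projective_plane P L I"
    and f: "bij_betw f (star_vertices (H_gens n)) (P <+> L)"
    and g: "bij_betw g (star_edges (H_rels n m k)) (incidence_edges I)"
    and g_ends: "\<forall>w\<in>star_edges (H_rels n m k). g w = (f (star_tail w), f (star_head w))"
    using conjunct2[OF assms[unfolded special_presentation_def]]
    by (elim exE conjE) (rule that; assumption)
  have fin: "finite P" "finite L" and I: "I \<subseteq> P \<times> L"
    using plane unfolding finite_projective_plane_def by - (elim conjE, assumption)+
  have deg: "card {y. (x, y) \<in> incidence_edges I} \<le> 3" if "x \<in> P <+> L" for x
    using card_edges_from_le_of_iso[OF f g _ star_tail_mem finite_star_edges card_star_edges_from that]
      g_ends by simp
  have deg_point: "card {l. (p, l) \<in> I} \<le> 3" for p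
  proof (cases "p \<in> P")
    case False
    then have "{l. (p, l) \<in> I} = {}" using I by auto
    then show ?thesis by simp
  qed (use deg[OF InlI] in \<open>simp add: card_incidence_edges_from\<close>)
  have deg_line: "card {p. (p, l) \<in> I} \<le> 3" for l
  proof (cases "l \<in> L")
    case False
    then have "{p. (p, l) \<in> I} = {}" using I by auto
    then show ?thesis by simp
  qed (use deg[OF InrI] in \<open>simp add: card_incidence_edges_from\<close>)
  have "card P \<le> 7" "card L \<le> 7"
    using finite_projective_plane_card_le[OF plane, of 2] deg_point deg_line by simp_all
  moreover have "card (star_vertices (H_gens n)) = card P + card L"
    using bij_betw_same_card[OF f] fin by (simp add: card_Plus)
  ultimately show ?thesis
    by (simp add: card_star_vertices)
qed

end

lemma relation_free_6_iff:
  fixes N A B :: int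
  shows "relation_free N A B ({(1,0), (0,1), (2,0), (0,2)} \<union> cycle_weights 6) \<longleftrightarrow>
    (\<forall>t::int. 1 \<le> t \<and> t \<le> 5 \<longrightarrow> \<not> [t * A = 0] (mod N) \<and> \<not> [t * B = 0] (mod N)) \<and>
    \<not> [A = B] (mod N) \<and> \<not> [A = - B] (mod N) \<and>
    \<not> [A = 2 * B] (mod N) \<and> \<not> [A = - (2 * B)] (mod N) \<and>
    \<not> [B = 2 * A] (mod N) \<and> \<not> [B = - (2 * A)] (mod N)"
  \<comment> \<open>A and B are instantiated, else the rule for [A = B] would match every congruence.\<close>
  unfolding cycle_weights_6 all_int_1_to_5 cong_iff_is_relation[where A = A and B = B]
  by (simp add: is_relation_uminus) argo

lemma relation_free_7_iff:
  fixes N A B :: int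
  shows "relation_free N A B ({(1,0), (0,1), (2,0), (0,2)} \<union> cycle_weights 7) \<longleftrightarrow>
    (\<forall>t::int. 1 \<le> t \<and> t \<le> 6 \<longrightarrow> \<not> [t * A = 0] (mod N) \<and> \<not> [t * B = 0] (mod N)) \<and>
    \<not> [A = 2 * B] (mod N) \<and> \<not> [A = - (2 * B)] (mod N) \<and>
    \<not> [A = 3 * B] (mod N) \<and> \<not> [A = - (3 * B)] (mod N) \<and>
    \<not> [B = 2 * A] (mod N) \<and> \<not> [B = - (2 * A)] (mod N) \<and>
    \<not> [B = 3 * A] (mod N) \<and> \<not> [B = - (3 * A)] (mod N) \<and>
    \<not> [2 * A = 2 * B] (mod N) \<and> \<not> [2 * A = - (2 * B)] (mod N)"
proof -
  have "is_relation N A B (2, 2)" if "is_relation N A B (1, 1)"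
    using is_relation_scale[OF that, of 2] by simp
  moreover have "is_relation N A B (2, - 2)" if "is_relation N A B (1, - 1)"
    using is_relation_scale[OF that, of 2] by simp
  ultimately show ?thesis
    unfolding cycle_weights_7 cycle_weights_6 all_int_1_to_6 cong_iff_is_relation[where A = A and B = B]
    by (simp add: is_relation_uminus) argo
qed

lemma relation_free_6_imp_8_le:
  fixes n :: nat
  assumes "0 < n" and "relation_free (int n) A B ({(1,0), (0,1), (2,0), (0,2)} \<union> cycle_weights 6)"
  shows "8 \<le> n"
proof -
  let ?P = "{(0,0), (1,0), (2,0), (0,1), (1,1), (2,1), (1,2), (1,-1)} :: (int \<times> int) set"
  have "card ?P \<le> n"
    by (rule card_le_of_no_relation_differences[OF assms(1)])
      (use assms(2) in \<open>auto simp: cycle_weights_6 is_relation_uminus\<close>)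
  then show ?thesis
    by simp
qed

theorem theorem6p1:
  fixes n m k :: nat and A B :: int
  assumes "2 \<le> n" and "1 \<le> m" and "m \<le> n" and "1 \<le> k" and "k \<le> n"
  defines "A \<equiv> int k" and "B \<equiv> int k - int m"
  shows
    "(C_T_presentation (H_gens n) (H_rels n m k) 3 6 \<longleftrightarrow>
       (\<forall>t::int. 1 \<le> t \<and> t \<le> 5 \<longrightarrow>
          \<not> [t * A = 0] (mod int n) \<and> \<not> [t * B = 0] (mod int n)) \<and>
       \<not> [A = B] (mod int n) \<and> \<not> [A = - B] (mod int n) \<and>
       \<not> [A = 2 * B] (mod int n) \<and> \<not> [A = - (2 * B)] (mod int n) \<and>
       \<not> [B = 2 * A] (mod int n) \<and> \<not> [B = - (2 * A)] (mod int n)) \<and>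
     (C_T_presentation (H_gens n) (H_rels n m k) 3 6 \<longrightarrow>
       \<not> special_presentation (H_gens n) (H_rels n m k)) \<and>
     (C_T_presentation (H_gens n) (H_rels n m k) 3 7 \<longleftrightarrow>
       (\<forall>t::int. 1 \<le> t \<and> t \<le> 6 \<longrightarrow>
          \<not> [t * A = 0] (mod int n) \<and> \<not> [t * B = 0] (mod int n)) \<and>
       \<not> [A = 2 * B] (mod int n) \<and> \<not> [A = - (2 * B)] (mod int n) \<and>
       \<not> [A = 3 * B] (mod int n) \<and> \<not> [A = - (3 * B)] (mod int n) \<and>
       \<not> [B = 2 * A] (mod int n) \<and> \<not> [B = - (2 * A)] (mod int n) \<and>
       \<not> [B = 3 * A] (mod int n) \<and> \<not> [B = - (3 * A)] (mod int n) \<and>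
       \<not> [2 * A = 2 * B] (mod int n) \<and> \<not> [2 * A = - (2 * B)] (mod int n))"
proof -
  interpret H_presentation n m k
    using assms(1) by unfold_locales simp
  have AB: "int k = A" "int k - int m = B"
    by (simp_all add: A_def B_def)
  have T6: "C_T_presentation (H_gens n) (H_rels n m k) 3 6 \<longleftrightarrow>
      relation_free (int n) A B ({(1,0), (0,1), (2,0), (0,2)} \<union> cycle_weights 6)"
    using C_T_presentation_iff_relation_free[of 6] unfolding AB(2) unfolding AB(1) by simp
  have T7: "C_T_presentation (H_gens n) (H_rels n m k) 3 7 \<longleftrightarrow>
      relation_free (int n) A B ({(1,0), (0,1), (2,0), (0,2)} \<union> cycle_weights 7)"
    using C_T_presentation_iff_relation_free[of 7] unfolding AB(2) unfolding AB(1) by simp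
  have "\<not> special_presentation (H_gens n) (H_rels n m k)"
    if "C_T_presentation (H_gens n) (H_rels n m k) 3 6"
  proof
    assume "special_presentation (H_gens n) (H_rels n m k)"
    then have "n \<le> 7"
      by (rule special_presentation_imp_le_7)
    moreover have "8 \<le> n"
      using relation_free_6_imp_8_le[OF n_pos] that T6 by blast
    ultimately show False
      by simp
  qed
  then show ?thesis
    using T6 T7 unfolding relation_free_6_iff relation_free_7_iff by blast
qed

end
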